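(* Let $\mathbb{F}\in\{\mathbb{R},\mathbb{C}\}$ and let $\Phi=\{\varphi_i\}_{i=1}^M\subseteq\mathbb{F}^N$ satisfy $\|\varphi_i\|=\sqrt{N/M}$ for every $i\in[M]$. Let $N\le k\le M$. Then $$CV_k(\Phi)\leq\sqrt{{M\choose k}{M-N\choose M-k}},$$ with equality if and only if $\Phi$ is a Parseval frame (i.e. $\Phi\Phi^*=I$) and $cv_k(\Phi_K)=\sqrt{{M\choose k}^{-1}{M-N\choose M-k}}$ for every $K\subseteq[M]$ with $|K|=k$.
   Context: $\Phi$ also denotes the $N\times M$ matrix with columns $\varphi_i$. For $K\subseteq[M]$, $\Phi_K$ is the submatrix of columns indexed by $K$. For an $N\times k$ matrix $F$ with $k\ge N$, $cv_k(F)=\sqrt{\det(FF^* )}$, and $CV_k(\Phi)=\sum_{|K|=k}cv_k(\Phi_K)$. *)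

theory Defs
  imports Complex_Main "Jordan_Normal_Form.Determinant" "Jordan_Normal_Form.Schur_Decomposition"
    "Jordan_Normal_Form.DL_Submatrix"
begin

text \<open>Frames are N x M matrices over F (real or complex); column i (i < M) is the
  frame vector phi_i.  Conjugate transpose is mat_adjoint.\<close>

definition vnorm :: "'a :: real_normed_field vec \<Rightarrow> real" where
  "vnorm v = sqrt (\<Sum>j<dim_vec v. (norm (v $ j))^2)"

definition cols_sub :: "'a mat \<Rightarrow> nat set \<Rightarrow> 'a mat" where
  "cols_sub A K = submatrix A {..<dim_row A} K"

text \<open>cv_k(F) = sqrt(det(F F^*)); det(F F^*) is a nonnegative real number,
  so we take its absolute value to land in the reals.\<close>
definition cv :: "'a :: {conjugatable_field, real_normed_field} mat \<Rightarrow> real" where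
  "cv F = sqrt (norm (det (F * mat_adjoint F)))"

definition CV :: "nat \<Rightarrow> 'a :: {conjugatable_field, real_normed_field} mat \<Rightarrow> real" where
  "CV k A = (\<Sum>K\<in>{K. K \<subseteq> {..<dim_col A} \<and> card K = k}. cv (cols_sub A K))"

end

theory Submission
  imports Defs
begin

text \<open>
  By Cauchy-Binet, cv(Phi_K)^2 is the sum of |det Phi_J|^2 over the N-subsets J of K. Each N-set J
  lies in C(M-N, k-N) of the k-sets K, so by Cauchy-Binet once more the sum of all cv(Phi_K)^2 is
  C(M-N, M-k) det(Phi Phi^*). The squared row norms of Phi add up to the squared column norms,
  i.e. to N, so Hadamard's inequality and AM-GM give det(Phi Phi^*) <= 1, with equality only if
  Phi Phi^* = I. Cauchy-Schwarz over the C(M,k) sets K then yields the bound, with equality iff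
  moreover all cv(Phi_K) coincide. Real frames are embedded into the complex case.
\<close>

lemma inj_on_pick: "inj_on (pick J) {..<card J}"
proof (rule inj_onI, rule ccontr)
  fix x y assume "x \<in> {..<card J}" "y \<in> {..<card J}" "pick J x = pick J y" "x \<noteq> y"
  then show False using pick_mono_le[of x J y] pick_mono_le[of y J x] by (auto simp: neq_iff)
qed

lemma pick_lessThan: "i < n \<Longrightarrow> pick {..<n} i = i"
  using pick_reduce_set[of i n UNIV] pick_UNIV by (simp add: lessThan_def)

lemma bij_betw_pick:
  assumes "finite J"
  shows "bij_betw (pick J) {..<card J} J"
proof -
  have sub: "pick J ` {..<card J} \<subseteq> J" using pick_in_set_le by auto
  have "card (pick J ` {..<card J}) = card J"
    using card_image[OF inj_on_pick] by simp
  then show ?thesis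
    using inj_on_pick card_subset_eq[OF assms sub] by (simp add: bij_betw_def)
qed

lemma bij_betw_pick_permutes:
  assumes J: "finite J" "card J = n"
  shows "bij_betw (\<lambda>q. restrict (pick J \<circ> q) {0..<n}) {q. q permutes {0..<n}}
    {f \<in> extensional {0..<n}. inj_on f {0..<n} \<and> f ` {0..<n} = J}"
proof (rule bij_betw_imageI)
  let ?U = "{0..<n}"
  have pick_bij: "bij_betw (pick J) ?U J" using bij_betw_pick[OF J(1)] J(2) by (simp add: lessThan_atLeast0)
  show "inj_on (\<lambda>q. restrict (pick J \<circ> q) ?U) {q. q permutes ?U}"
  proof (rule inj_onI, rule ext)
    fix q q' r assume q: "q \<in> {q. q permutes ?U}" and q': "q' \<in> {q. q permutes ?U}"
      and eq: "restrict (pick J \<circ> q) ?U = restrict (pick J \<circ> q') ?U"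
    show "q r = q' r"
    proof (cases "r \<in> ?U")
      case True
      then have "pick J (q r) = pick J (q' r)" using fun_cong[OF eq, of r] by simp
      with True q q' show ?thesis
        using bij_betw_inv_into_left[OF pick_bij] permutes_in_image by (metis mem_Collect_eq)
    next
      case False
      with q q' show ?thesis by (simp add: permutes_not_in)
    qed
  qed
  show "(\<lambda>q. restrict (pick J \<circ> q) ?U) ` {q. q permutes ?U} =
    {f \<in> extensional ?U. inj_on f ?U \<and> f ` ?U = J}"
  proof (intro equalityI subsetI)
    fix f assume "f \<in> (\<lambda>q. restrict (pick J \<circ> q) ?U) ` {q. q permutes ?U}"
    then obtain q where q: "q permutes ?U" and f: "f = restrict (pick J \<circ> q) ?U" by auto
    have "inj_on (pick J) (q ` ?U)"
      using pick_bij permutes_image[OF q] by (simp add: bij_betw_def)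
    then have "inj_on (pick J \<circ> q) ?U" by (rule comp_inj_on[OF permutes_inj_on[OF q]])
    moreover have "(pick J \<circ> q) ` ?U = J"
      unfolding image_comp[symmetric] permutes_image[OF q] using pick_bij by (simp add: bij_betw_def)
    ultimately show "f \<in> {f \<in> extensional ?U. inj_on f ?U \<and> f ` ?U = J}"
      unfolding f by (simp add: inj_on_def image_def)
  next
    fix f assume f: "f \<in> {f \<in> extensional ?U. inj_on f ?U \<and> f ` ?U = J}"
    \<comment> \<open>the rank of \<open>f r\<close> in \<open>J\<close> recovers the permutation\<close>
    define q where "q r = (if r < n then card {a\<in>J. a < f r} else r)" for r
    have pick_q: "pick J (q r) = f r" if "r \<in> ?U" for r
      using that f pick_card_in_set unfolding q_def by auto
    have "q permutes ?U"
    proof (rule inj_on_nat_permutes)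
      show "inj_on q ?U"
      proof (rule inj_onI)
        fix r r' assume "r \<in> ?U" "r' \<in> ?U" "q r = q r'"
        then have "f r = f r'" using pick_q by metis
        with f \<open>r \<in> ?U\<close> \<open>r' \<in> ?U\<close> show "r = r'" by (auto dest: inj_onD)
      qed
      have "card {a\<in>J. a < f r} < n" if "r \<in> ?U" for r
        using that f J by (intro psubset_card_mono[THEN order.strict_trans2]) auto
      then show "q \<in> ?U \<rightarrow> ?U" by (simp add: q_def)
    qed (auto simp: q_def)
    moreover have "f = restrict (pick J \<circ> q) ?U"
      using f pick_q by (auto simp: extensional_def)
    ultimately show "f \<in> (\<lambda>q. restrict (pick J \<circ> q) ?U) ` {q. q permutes ?U}" by blast
  qed
qed

lemma sum_injective_PiE_by_image:
  assumes K: "finite K"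
  shows "(\<Sum>f | f \<in> PiE {0..<n} (\<lambda>_. K) \<and> inj_on f {0..<n}. g f) =
    (\<Sum>J | J \<subseteq> K \<and> card J = n. \<Sum>q | q permutes {0..<n}. g (restrict (pick J \<circ> q) {0..<n}))"
proof -
  let ?U = "{0..<n}"
  let ?F = "{f. f \<in> PiE ?U (\<lambda>_. K) \<and> inj_on f ?U}"
  let ?Js = "{J. J \<subseteq> K \<and> card J = n}"
  have "finite ?F" using K by (simp add: finite_PiE)
  moreover have "finite ?Js" using K by (auto intro: finite_subset[of _ "Pow K"])
  moreover have "(\<lambda>f. f ` ?U) ` ?F \<subseteq> ?Js" by (auto simp: PiE_def card_image)
  ultimately have "sum g ?F = (\<Sum>J\<in>?Js. sum g {f \<in> ?F. f ` ?U = J})"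
    by (rule sum.group[symmetric])
  also have "\<dots> = (\<Sum>J\<in>?Js. sum g {f \<in> extensional ?U. inj_on f ?U \<and> f ` ?U = J})"
    by (intro sum.cong refl arg_cong[where f = "sum g"]) (auto simp: PiE_def)
  also have "\<dots> = (\<Sum>J\<in>?Js. \<Sum>q | q permutes ?U. g (restrict (pick J \<circ> q) ?U))"
  proof (rule sum.cong[OF refl])
    fix J assume "J \<in> ?Js"
    then have "finite J" "card J = n" using K finite_subset by auto
    from sum.reindex_bij_betw[OF bij_betw_pick_permutes[OF this], of g]
    show "sum g {f \<in> extensional ?U. inj_on f ?U \<and> f ` ?U = J} =
      (\<Sum>q | q permutes ?U. g (restrict (pick J \<circ> q) ?U))" by simp
  qed
  finally show ?thesis by simp
qed

lemma det_mat_sum_expand: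
  fixes a b :: "nat \<Rightarrow> nat \<Rightarrow> 'a::comm_ring_1"
  assumes K: "finite K"
  shows "det (mat n n (\<lambda>(r,s). \<Sum>i\<in>K. a r i * b s i)) =
    (\<Sum>f \<in> PiE {0..<n} (\<lambda>_. K). (\<Prod>r=0..<n. a r (f r)) * det (mat n n (\<lambda>(r,s). b s (f r))))"
proof -
  let ?U = "{0..<n}"
  let ?P = "{p. p permutes ?U}"
  have det_b: "det (mat n n (\<lambda>(r,s). b s (f r))) = (\<Sum>p\<in>?P. signof p * (\<Prod>r\<in>?U. b (p r) (f r)))" for f
    unfolding det_def'[OF mat_carrier]
    by (intro sum.cong refl arg_cong[where f="\<lambda>x. _ * x"] prod.cong) (auto simp: permutes_in_image)
  have "det (mat n n (\<lambda>(r,s). \<Sum>i\<in>K. a r i * b s i)) =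
     (\<Sum>p\<in>?P. signof p * (\<Prod>r\<in>?U. \<Sum>i\<in>K. a r i * b (p r) i))"
    unfolding det_def'[OF mat_carrier]
    by (intro sum.cong refl arg_cong[where f="\<lambda>x. _ * x"] prod.cong) (auto simp: permutes_in_image)
  also have "\<dots> = (\<Sum>p\<in>?P. signof p * (\<Sum>f \<in> PiE ?U (\<lambda>_. K). \<Prod>r\<in>?U. a r (f r) * b (p r) (f r)))"
    by (subst prod_sum_PiE) (use K in auto)
  also have "\<dots> = (\<Sum>f \<in> PiE ?U (\<lambda>_. K). (\<Prod>r\<in>?U. a r (f r)) * (\<Sum>p\<in>?P. signof p * (\<Prod>r\<in>?U. b (p r) (f r))))"
    by (simp add: sum_distrib_left prod.distrib sum.swap[of _ ?P] algebra_simps)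
  finally show ?thesis by (simp only: det_b)
qed

lemma sum_permutes_prod_times_det_permuted:
  fixes a b :: "nat \<Rightarrow> nat \<Rightarrow> 'a::comm_ring_1"
  shows "(\<Sum>q | q permutes {0..<n}. (\<Prod>r=0..<n. a r (q r)) * det (mat n n (\<lambda>(r,s). b s (q r)))) =
    det (mat n n (\<lambda>(r,s). a r s)) * det (mat n n (\<lambda>(r,s). b s r))"
proof -
  let ?B = "mat n n (\<lambda>(r,s). b s r)"
  have det_q: "det (mat n n (\<lambda>(r,s). b s (q r))) = signof q * det ?B" if q: "q permutes {0..<n}" for q
  proof -
    have "mat n n (\<lambda>(r,s). b s (q r)) = mat n n (\<lambda>(r,s). ?B $$ (q r, s))"
      using permutes_in_image[OF q] by (intro eq_matI) auto
    then show ?thesis using det_permute_rows[OF mat_carrier q] by simp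
  qed
  have "(\<Sum>q | q permutes {0..<n}. (\<Prod>r=0..<n. a r (q r)) * det (mat n n (\<lambda>(r,s). b s (q r)))) =
    (\<Sum>q | q permutes {0..<n}. signof q * (\<Prod>r=0..<n. a r (q r)) * det ?B)"
    using det_q by (intro sum.cong refl) (simp add: ac_simps)
  also have "\<dots> = (\<Sum>q | q permutes {0..<n}. signof q * (\<Prod>r=0..<n. a r (q r))) * det ?B"
    by (simp add: sum_distrib_right)
  also have "(\<Sum>q | q permutes {0..<n}. signof q * (\<Prod>r=0..<n. a r (q r))) = det (mat n n (\<lambda>(r,s). a r s))"
    unfolding det_def'[OF mat_carrier]
    by (intro sum.cong refl arg_cong[where f="\<lambda>x. _ * x"] prod.cong) (auto simp: permutes_in_image)
  finally show ?thesis .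
qed

theorem cauchy_binet:
  fixes a b :: "nat \<Rightarrow> nat \<Rightarrow> 'a::comm_ring_1"
  assumes K: "finite K"
  shows "det (mat n n (\<lambda>(r,s). \<Sum>i\<in>K. a r i * b s i)) =
    (\<Sum>J | J \<subseteq> K \<and> card J = n. det (mat n n (\<lambda>(r,s). a r (pick J s))) *
        det (mat n n (\<lambda>(r,s). b s (pick J r))))"
proof -
  let ?U = "{0..<n}"
  let ?g = "\<lambda>f. (\<Prod>r\<in>?U. a r (f r)) * det (mat n n (\<lambda>(r,s). b s (f r)))"
  have "det (mat n n (\<lambda>(r,s). \<Sum>i\<in>K. a r i * b s i)) = (\<Sum>f \<in> PiE ?U (\<lambda>_. K). ?g f)"
    by (rule det_mat_sum_expand[OF K])
  also have "\<dots> = (\<Sum>f | f \<in> PiE ?U (\<lambda>_. K) \<and> inj_on f ?U. ?g f)"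
  proof (rule sum.mono_neutral_right)
    show "\<forall>f \<in> PiE ?U (\<lambda>_. K) - {f. f \<in> PiE ?U (\<lambda>_. K) \<and> inj_on f ?U}. ?g f = 0"
    proof
      fix f assume "f \<in> PiE ?U (\<lambda>_. K) - {f. f \<in> PiE ?U (\<lambda>_. K) \<and> inj_on f ?U}"
      then obtain i j where "i \<in> ?U" "j \<in> ?U" "i \<noteq> j" "f i = f j" unfolding inj_on_def by auto
      then have "det (mat n n (\<lambda>(r,s). b s (f r))) = 0"
        by (intro det_identical_rows[OF mat_carrier, where i = i and j = j]) auto
      then show "?g f = 0" by simp
    qed
  qed (use K in \<open>auto simp: finite_PiE\<close>)
  also have "\<dots> = (\<Sum>J | J \<subseteq> K \<and> card J = n. \<Sum>q | q permutes ?U. ?g (restrict (pick J \<circ> q) ?U))"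
    by (rule sum_injective_PiE_by_image[OF K])
  also have "\<dots> = (\<Sum>J | J \<subseteq> K \<and> card J = n. det (mat n n (\<lambda>(r,s). a r (pick J s))) *
        det (mat n n (\<lambda>(r,s). b s (pick J r))))"
  proof (intro sum.cong refl)
    fix J
    have "?g (restrict (pick J \<circ> q) ?U) = ?g (pick J \<circ> q)" for q
      by (intro arg_cong2[where f = "(*)"] prod.cong arg_cong[where f = det] eq_matI) auto
    then show "(\<Sum>q | q permutes ?U. ?g (restrict (pick J \<circ> q) ?U)) =
      det (mat n n (\<lambda>(r,s). a r (pick J s))) * det (mat n n (\<lambda>(r,s). b s (pick J r)))"
      using sum_permutes_prod_times_det_permuted[where n = n and a = "\<lambda>r i. a r (pick J i)"
          and b = "\<lambda>s i. b s (pick J i)"]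
      by simp
  qed
  finally show ?thesis .
qed

lemma carrier_mat_adjoint: "A \<in> carrier_mat n m \<Longrightarrow> mat_adjoint A \<in> carrier_mat m n"
  unfolding mat_adjoint_def carrier_mat_def by simp

lemma index_mat_adjoint:
  "A \<in> carrier_mat n m \<Longrightarrow> i < m \<Longrightarrow> j < n \<Longrightarrow> mat_adjoint A $$ (i,j) = conjugate (A $$ (j,i))"
  unfolding mat_adjoint_def carrier_mat_def by (simp add: mat_of_rows_index)

lemma index_mult_mat_sum:
  assumes "A \<in> carrier_mat n m" "B \<in> carrier_mat m k" "i < n" "j < k"
  shows "(A * B) $$ (i,j) = (\<Sum>l<m. A $$ (i,l) * B $$ (l,j))"
  using assms by (simp add: scalar_prod_def lessThan_atLeast0)

lemma mat_adjoint_mult: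
  fixes A B :: "'a::conjugatable_field mat"
  assumes A: "A \<in> carrier_mat n m" and B: "B \<in> carrier_mat m k"
  shows "mat_adjoint (A * B) = mat_adjoint B * mat_adjoint A"
proof (rule eq_matI)
  have AB: "A * B \<in> carrier_mat n k" using A B by simp
  note adj = carrier_mat_adjoint[OF A] carrier_mat_adjoint[OF B] carrier_mat_adjoint[OF AB]
  fix i j assume "i < dim_row (mat_adjoint B * mat_adjoint A)" "j < dim_col (mat_adjoint B * mat_adjoint A)"
  then have i: "i < k" and j: "j < n" using adj by auto
  have "mat_adjoint (A * B) $$ (i,j) = conjugate (\<Sum>l<m. A $$ (j,l) * B $$ (l,i))"
    using index_mat_adjoint[OF AB i j] index_mult_mat_sum[OF A B j i] by simp
  also have "\<dots> = (\<Sum>l<m. mat_adjoint B $$ (i,l) * mat_adjoint A $$ (l,j))"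
    using index_mat_adjoint[OF A] index_mat_adjoint[OF B] i j
    by (simp add: sum_conjugate conjugate_dist_mul mult.commute)
  also have "\<dots> = (mat_adjoint B * mat_adjoint A) $$ (i,j)"
    using index_mult_mat_sum[OF adj(2,1) i j] by simp
  finally show "mat_adjoint (A * B) $$ (i,j) = (mat_adjoint B * mat_adjoint A) $$ (i,j)" .
qed (use carrier_mat_adjoint[OF mult_carrier_mat[OF A B]] carrier_mat_adjoint[OF A]
    carrier_mat_adjoint[OF B] in auto)

interpretation cnj: comm_ring_hom cnj
  by unfold_locales auto

lemma det_mat_adjoint:
  fixes A :: "complex mat"
  assumes A: "A \<in> carrier_mat n n"
  shows "det (mat_adjoint A) = cnj (det A)"
proof -
  have "mat_adjoint A = transpose_mat (map_mat cnj A)"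
    using A index_mat_adjoint[OF A] carrier_mat_adjoint[OF A] by (intro eq_matI) auto
  then show ?thesis
    using det_transpose[of "map_mat cnj A" n] A cnj.hom_det by simp
qed

definition gram :: "complex mat \<Rightarrow> complex mat" where
  "gram A = A * mat_adjoint A"

definition row_sqnorm :: "complex mat \<Rightarrow> nat \<Rightarrow> real" where
  "row_sqnorm A r = (\<Sum>l<dim_col A. (cmod (A $$ (r,l)))^2)"

lemma row_sqnorm_nonneg: "row_sqnorm A r \<ge> 0"
  unfolding row_sqnorm_def by (simp add: sum_nonneg)

lemma carrier_mat_gram: "A \<in> carrier_mat n m \<Longrightarrow> gram A \<in> carrier_mat n n"
  unfolding gram_def by (metis carrier_mat_adjoint mult_carrier_mat)

lemma index_gram:
  assumes A: "A \<in> carrier_mat n m" and "r < n" "s < n"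
  shows "gram A $$ (r,s) = (\<Sum>l<m. A $$ (r,l) * cnj (A $$ (s,l)))"
  using assms index_mat_adjoint[OF A]
  by (simp add: gram_def index_mult_mat_sum[OF A carrier_mat_adjoint[OF A]])

lemma index_gram_diag:
  assumes A: "A \<in> carrier_mat n m" and "r < n"
  shows "gram A $$ (r,r) = of_real (row_sqnorm A r)"
  unfolding index_gram[OF assms assms(2)] row_sqnorm_def of_real_sum complex_norm_square
  using A by simp

lemma det_gram_mult_left:
  assumes A: "A \<in> carrier_mat n m" and E: "E \<in> carrier_mat n n" and "det E = 1"
  shows "det (gram (E * A)) = det (gram A)"
proof -
  note adj = carrier_mat_adjoint[OF A] carrier_mat_adjoint[OF E]
  have G: "gram A \<in> carrier_mat n n" by (rule carrier_mat_gram[OF A])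
  have "gram (E * A) = E * (A * (mat_adjoint A * mat_adjoint E))"
    unfolding gram_def mat_adjoint_mult[OF E A] by (rule assoc_mult_mat[OF E A mult_carrier_mat[OF adj(1,2)]])
  also have "\<dots> = E * gram A * mat_adjoint E"
    unfolding gram_def using assoc_mult_mat[OF A adj(1,2)] assoc_mult_mat[OF E G[unfolded gram_def] adj(2)]
    by simp
  finally have "gram (E * A) = E * gram A * mat_adjoint E" .
  then show ?thesis
    using assms G adj det_mult[OF mult_carrier_mat[OF E G] adj(2)] det_mult[OF E G] det_mat_adjoint[OF E]
    by simp
qed

lemma orthogonal_projection_residual:
  fixes x v :: "'i \<Rightarrow> complex"
  assumes p: "p = (\<Sum>l\<in>L. (cmod (v l))^2)" and s: "s = (\<Sum>l\<in>L. x l * cnj (v l))" and "p > 0"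
  shows "(\<Sum>l\<in>L. (cmod (x l - s / of_real p * v l))^2) = (\<Sum>l\<in>L. (cmod (x l))^2) - (cmod s)^2 / p"
    and "(\<Sum>l\<in>L. v l * cnj (x l - s / of_real p * v l)) = 0"
proof -
  define c where "c = s / of_real p"
  have P: "of_real p = (\<Sum>l\<in>L. v l * cnj (v l))"
    unfolding p of_real_sum complex_norm_square ..
  have cs: "(\<Sum>l\<in>L. v l * cnj (x l)) = cnj s"
    unfolding s cnj_sum by (simp add: mult.commute)
  have pne: "complex_of_real p \<noteq> 0" using \<open>p > 0\<close> by simp
  have "complex_of_real (\<Sum>l\<in>L. (cmod (x l - c * v l))^2) = (\<Sum>l\<in>L. (x l - c * v l) * cnj (x l - c * v l))"
    unfolding of_real_sum complex_norm_square ..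
  also have "\<dots> = (\<Sum>l\<in>L. x l * cnj (x l) - cnj c * (x l * cnj (v l)) - c * (v l * cnj (x l))
      + c * cnj c * (v l * cnj (v l)))"
    by (rule sum.cong[OF refl]) (simp add: algebra_simps)
  also have "\<dots> = (\<Sum>l\<in>L. x l * cnj (x l)) - cnj c * s - c * cnj s + c * cnj c * of_real p"
    unfolding P s cs[symmetric] by (simp add: sum.distrib sum_subtractf sum_distrib_left ac_simps)
  also have "\<dots> = (\<Sum>l\<in>L. x l * cnj (x l)) - s * cnj s / of_real p"
    using pne by (simp add: c_def field_simps)
  also have "\<dots> = complex_of_real ((\<Sum>l\<in>L. (cmod (x l))^2) - (cmod s)^2 / p)"
    unfolding of_real_diff of_real_divide of_real_sum complex_norm_square ..
  finally show "(\<Sum>l\<in>L. (cmod (x l - s / of_real p * v l))^2) = (\<Sum>l\<in>L. (cmod (x l))^2) - (cmod s)^2 / p"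
    unfolding c_def of_real_eq_iff .
  have "(\<Sum>l\<in>L. v l * cnj (x l - c * v l)) = (\<Sum>l\<in>L. v l * cnj (x l) - cnj c * (v l * cnj (v l)))"
    by (rule sum.cong[OF refl]) (simp add: algebra_simps)
  also have "\<dots> = 0"
    unfolding sum_subtractf cs P[symmetric] sum_distrib_left[symmetric] using pne by (simp add: c_def)
  finally show "(\<Sum>l\<in>L. v l * cnj (x l - s / of_real p * v l)) = 0" unfolding c_def .
qed

lemma det_gram_first_row_orthogonal:
  assumes A: "A \<in> carrier_mat (Suc n) m"
    and orth: "\<And>j. 0 < j \<Longrightarrow> j < Suc n \<Longrightarrow> gram A $$ (0,j) = 0"
  shows "det (gram A) = of_real (row_sqnorm A 0) * det (gram (mat n m (\<lambda>(i,l). A $$ (Suc i, l))))"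
proof -
  let ?G = "gram A" and ?B = "mat n m (\<lambda>(i,l). A $$ (Suc i, l))"
  have G: "?G \<in> carrier_mat (Suc n) (Suc n)" by (rule carrier_mat_gram[OF A])
  have B: "?B \<in> carrier_mat n m" by simp
  have "mat_delete ?G 0 0 = gram ?B"
  proof (rule eq_matI)
    fix i j assume "i < dim_row (gram ?B)" "j < dim_col (gram ?B)"
    then have "i < n" "j < n" using carrier_mat_gram[OF B] by auto
    then show "mat_delete ?G 0 0 $$ (i,j) = gram ?B $$ (i,j)"
      using G by (simp add: mat_delete_def index_gram[OF A] index_gram[OF B])
  qed (use G carrier_mat_gram[OF B] in auto)
  moreover have "det ?G = ?G $$ (0,0) * cofactor ?G 0 0"
    using laplace_expansion_row[OF G, of 0] orth unfolding sum.lessThan_Suc_shift by simp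
  ultimately show ?thesis
    by (simp add: cofactor_def index_gram_diag[OF A])
qed

lemma det_gram_sub_multiples_first_row:
  assumes A: "A \<in> carrier_mat (Suc n) m"
  shows "det (gram (mat (Suc n) m (\<lambda>(i,l). if i = 0 then A $$ (0,l) else A $$ (i,l) - c i * A $$ (0,l))))
    = det (gram A)"
proof -
  define E where "E = mat (Suc n) (Suc n) (\<lambda>(i,j). if i = j then 1 else if j = 0 then - c i else 0)"
  have E: "E \<in> carrier_mat (Suc n) (Suc n)" by (simp add: E_def)
  have "E * A = mat (Suc n) m (\<lambda>(i,l). if i = 0 then A $$ (0,l) else A $$ (i,l) - c i * A $$ (0,l))"
  proof (rule eq_matI)
    fix i l assume "i < dim_row (mat (Suc n) m (\<lambda>(i,l). if i = 0 then A $$ (0,l) else A $$ (i,l) - c i * A $$ (0,l)))"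
      "l < dim_col (mat (Suc n) m (\<lambda>(i,l). if i = 0 then A $$ (0,l) else A $$ (i,l) - c i * A $$ (0,l)))"
    then have i: "i < Suc n" and l: "l < m" by auto
    have "(E * A) $$ (i,l) = (\<Sum>j<Suc n. (if j = i then A $$ (i,l) else 0)
        + (if j = 0 then (if i = 0 then 0 else - c i * A $$ (0,l)) else 0))"
      unfolding index_mult_mat_sum[OF E A i l] by (rule sum.cong[OF refl]) (use i in \<open>auto simp: E_def\<close>)
    then show "(E * A) $$ (i,l) = mat (Suc n) m (\<lambda>(i,l). if i = 0 then A $$ (0,l) else A $$ (i,l) - c i * A $$ (0,l)) $$ (i,l)"
      using i l by (simp add: sum.distrib)
  qed (use A E in auto)
  moreover have "det E = 1"
  proof -
    have "det E = prod_list (diag_mat E)"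
      by (rule det_lower_triangular[OF _ E]) (auto simp: E_def)
    also have "diag_mat E = map (\<lambda>i. 1) [0..<Suc n]"
      using E by (auto simp: E_def diag_mat_def)
    finally show ?thesis by (simp add: map_replicate_const)
  qed
  ultimately show ?thesis using det_gram_mult_left[OF A E] by simp
qed

lemma gram_schmidt_first_row:
  assumes A: "A \<in> carrier_mat (Suc n) m"
  obtains A' where "A' \<in> carrier_mat (Suc n) m" "det (gram A') = det (gram A)"
    "row_sqnorm A' 0 = row_sqnorm A 0" "\<And>i. i \<le> n \<Longrightarrow> row_sqnorm A' i \<le> row_sqnorm A i"
    "\<And>j. 0 < j \<Longrightarrow> j < Suc n \<Longrightarrow> gram A' $$ (0,j) = 0"
proof (cases "row_sqnorm A 0 = 0")
  case True
  then have "A $$ (0,l) = 0" if "l < m" for l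
    using A that sum_nonneg_eq_0_iff[of "{..<m}" "\<lambda>l. (cmod (A $$ (0,l)))^2"] by (auto simp: row_sqnorm_def)
  then show thesis using A by (intro that[of A]) (auto simp: index_gram)
next
  case False
  define p where "p = row_sqnorm A 0"
  have pos: "p > 0" using False row_sqnorm_nonneg[of A 0] by (simp add: p_def)
  have p_sum: "p = (\<Sum>l<m. (cmod (A $$ (0,l)))^2)" using A by (simp add: p_def row_sqnorm_def)
  define c where "c i = (\<Sum>l<m. A $$ (i,l) * cnj (A $$ (0,l))) / of_real p" for i
  define A' where "A' = mat (Suc n) m (\<lambda>(i,l). if i = 0 then A $$ (0,l) else A $$ (i,l) - c i * A $$ (0,l))"
  have A': "A' \<in> carrier_mat (Suc n) m" by (simp add: A'_def)
  have "row_sqnorm A' i \<le> row_sqnorm A i" if "i \<le> n" for i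
  proof (cases "i = 0")
    case False
    have "row_sqnorm A' i = (\<Sum>l<m. (cmod (A $$ (i,l) - c i * A $$ (0,l)))^2)"
      using A' False that by (simp add: row_sqnorm_def A'_def)
    also have "\<dots> = (\<Sum>l<m. (cmod (A $$ (i,l)))^2) - (cmod (\<Sum>l<m. A $$ (i,l) * cnj (A $$ (0,l))))^2 / p"
      unfolding c_def by (rule orthogonal_projection_residual(1)[OF p_sum refl pos])
    also have "\<dots> \<le> row_sqnorm A i" using A pos by (simp add: row_sqnorm_def)
    finally show ?thesis .
  qed (use A A' in \<open>simp add: row_sqnorm_def A'_def\<close>)
  moreover have "gram A' $$ (0,j) = 0" if "0 < j" "j < Suc n" for j
  proof -
    have "gram A' $$ (0,j) = (\<Sum>l<m. A $$ (0,l) * cnj (A $$ (j,l) - c j * A $$ (0,l)))"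
      using that by (simp add: index_gram[OF A']) (simp add: A'_def)
    also have "\<dots> = 0"
      unfolding c_def by (rule orthogonal_projection_residual(2)[OF p_sum refl pos])
    finally show ?thesis .
  qed
  ultimately show thesis
    using A A' det_gram_sub_multiples_first_row[OF A] by (intro that[of A']) (auto simp: row_sqnorm_def A'_def)
qed

theorem hadamard_gram:
  "A \<in> carrier_mat n m \<Longrightarrow> cmod (det (gram A)) \<le> (\<Prod>r<n. row_sqnorm A r)"
proof (induction n arbitrary: A)
  case 0
  then have "gram A \<in> carrier_mat 0 0" by (rule carrier_mat_gram)
  then show ?case by simp
next
  case (Suc n)
  obtain A' where A': "A' \<in> carrier_mat (Suc n) m" "det (gram A') = det (gram A)"
    "row_sqnorm A' 0 = row_sqnorm A 0" "\<And>i. i \<le> n \<Longrightarrow> row_sqnorm A' i \<le> row_sqnorm A i"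
    "\<And>j. 0 < j \<Longrightarrow> j < Suc n \<Longrightarrow> gram A' $$ (0,j) = 0"
    using gram_schmidt_first_row[OF Suc.prems] by blast
  let ?B = "mat n m (\<lambda>(i,l). A' $$ (Suc i, l))"
  have B_rows: "row_sqnorm ?B r \<le> row_sqnorm A (Suc r)" if "r < n" for r
    using A'(1) A'(4)[of "Suc r"] that by (simp add: row_sqnorm_def)
  have "cmod (det (gram A)) = row_sqnorm A 0 * cmod (det (gram ?B))"
    using det_gram_first_row_orthogonal[OF A'(1,5)] A'(2,3) row_sqnorm_nonneg[of A 0]
    by (simp add: norm_mult)
  also have "\<dots> \<le> row_sqnorm A 0 * (\<Prod>r<n. row_sqnorm ?B r)"
    using Suc.IH[of ?B] row_sqnorm_nonneg by (simp add: mult_left_mono)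
  also have "\<dots> \<le> row_sqnorm A 0 * (\<Prod>r<n. row_sqnorm A (Suc r))"
    using B_rows row_sqnorm_nonneg by (intro mult_left_mono prod_mono) auto
  also have "\<dots> = (\<Prod>r<Suc n. row_sqnorm A r)" unfolding prod.lessThan_Suc_shift ..
  finally show ?case .
qed

lemma prod_le_1_if_sum_eq_card:
  fixes x :: "'i \<Rightarrow> real"
  assumes I: "finite I" and nonneg: "\<And>i. i \<in> I \<Longrightarrow> 0 \<le> x i" and sum: "(\<Sum>i\<in>I. x i) = card I"
  shows "(\<Prod>i\<in>I. x i) \<le> 1" and "1 \<le> (\<Prod>i\<in>I. x i) \<Longrightarrow> i \<in> I \<Longrightarrow> x i = 1"
proof -
  \<comment> \<open>\<open>x \<le> exp (x - 1)\<close>, with equality only at \<open>1\<close>, and the right-hand sides multiply to \<open>exp 0\<close>\<close>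
  have exp_bound: "x i \<le> exp (x i - 1)" for i
    using exp_ge_add_one_self[of "x i - 1"] by simp
  have "(\<Prod>i\<in>I. exp (x i - 1)) = 1"
    using sum by (simp add: exp_sum[OF I, symmetric] sum_subtractf)
  moreover have "(\<Prod>i\<in>I. x i) \<le> (\<Prod>i\<in>I. exp (x i - 1))"
    using nonneg exp_bound by (intro prod_mono) auto
  ultimately show "(\<Prod>i\<in>I. x i) \<le> 1" by simp
  assume "1 \<le> (\<Prod>i\<in>I. x i)" and i: "i \<in> I"
  show "x i = 1"
  proof (rule ccontr)
    assume "x i \<noteq> 1"
    then have "x i < exp (x i - 1)" using exp_minus_greater[of "1 - x i"] by simp
    then have "(\<Prod>i\<in>I. x i) < (\<Prod>i\<in>I. exp (x i - 1))"
      using I i nonneg exp_bound by (intro prod_mono_strict[of i]) auto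
    with \<open>1 \<le> (\<Prod>i\<in>I. x i)\<close> \<open>(\<Prod>i\<in>I. exp (x i - 1)) = 1\<close> show False by simp
  qed
qed

lemma gram_offdiag_eq_0:
  assumes A: "A \<in> carrier_mat n m" and rows: "\<And>r. r < n \<Longrightarrow> row_sqnorm A r = 1"
    and det_ge: "1 \<le> cmod (det (gram A))" and "a < n" "b < n" "a \<noteq> b"
  shows "gram A $$ (b,a) = 0"
proof (rule ccontr)
  \<comment> \<open>otherwise projecting row \<open>a\<close> out of row \<open>b\<close> shrinks it, contradicting Hadamard's inequality\<close>
  define s where "s = (\<Sum>l<m. A $$ (b,l) * cnj (A $$ (a,l)))"
  assume "gram A $$ (b,a) \<noteq> 0"
  then have "s \<noteq> 0" using index_gram[OF A \<open>b < n\<close> \<open>a < n\<close>] by (simp add: s_def)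
  have row_a: "1 = (\<Sum>l<m. (cmod (A $$ (a,l)))^2)" using rows[OF \<open>a < n\<close>] A by (simp add: row_sqnorm_def)
  define A' where "A' = addrow (- s) b a A"
  have A': "A' \<in> carrier_mat n m" by (simp add: A'_def A)
  have "det (gram A') = det (gram A)"
    using det_gram_mult_left[OF A _ det_addrow_mat[OF \<open>a \<noteq> b\<close>[symmetric]]] addrow_mat[OF A \<open>a < n\<close>]
    by (simp add: A'_def)
  have rows': "row_sqnorm A' r = 1" if "r < n" "r \<noteq> b" for r
    using A that rows[OF that(1)] by (simp add: A'_def row_sqnorm_def)
  have "row_sqnorm A' b = (\<Sum>l<m. (cmod (A $$ (b,l) - s / of_real 1 * A $$ (a,l)))^2)"
    using A \<open>b < n\<close> by (simp add: A'_def row_sqnorm_def)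
  also have "\<dots> = (\<Sum>l<m. (cmod (A $$ (b,l)))^2) - (cmod s)^2 / 1"
    by (rule orthogonal_projection_residual(1)[OF row_a s_def]) simp
  also have "\<dots> = 1 - (cmod s)^2" using rows[OF \<open>b < n\<close>] A by (simp add: row_sqnorm_def)
  finally have "row_sqnorm A' b < 1" using \<open>s \<noteq> 0\<close> by simp
  moreover have "(\<Prod>r<n. row_sqnorm A' r) = row_sqnorm A' b"
    using prod.remove[of "{..<n}" b "row_sqnorm A'"] \<open>b < n\<close> rows' by simp
  ultimately show False
    using hadamard_gram[OF A'] \<open>det (gram A') = det (gram A)\<close> det_ge by simp
qed

lemma det_gram_le_1:
  assumes A: "A \<in> carrier_mat n m" and rows: "(\<Sum>r<n. row_sqnorm A r) = n"
  shows "cmod (det (gram A)) \<le> 1"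
  using hadamard_gram[OF A] prod_le_1_if_sum_eq_card(1)[of "{..<n}" "row_sqnorm A"] rows row_sqnorm_nonneg
  by fastforce

lemma gram_eq_one_if_det_ge_1:
  assumes A: "A \<in> carrier_mat n m" and rows: "(\<Sum>r<n. row_sqnorm A r) = n"
    and det_ge: "1 \<le> cmod (det (gram A))"
  shows "gram A = 1\<^sub>m n"
proof (rule eq_matI)
  have rows_1: "row_sqnorm A r = 1" if "r < n" for r
    using prod_le_1_if_sum_eq_card(2)[of "{..<n}" "row_sqnorm A"] hadamard_gram[OF A] rows det_ge that
      row_sqnorm_nonneg by fastforce
  fix i j assume "i < dim_row (1\<^sub>m n)" "j < dim_col (1\<^sub>m n)"
  then show "gram A $$ (i,j) = 1\<^sub>m n $$ (i,j)"
    using index_gram_diag[OF A] rows_1 gram_offdiag_eq_0[OF A rows_1 det_ge, of j i] by auto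
qed (use carrier_mat_gram[OF A] in auto)

lemma cols_sub_altdef:
  assumes A: "A \<in> carrier_mat N M" and K: "K \<subseteq> {..<M}"
  shows "cols_sub A K = mat N (card K) (\<lambda>(i,j). A $$ (i, pick K j))"
proof -
  have "{j. j < dim_col A \<and> j \<in> K} = K" using A K by auto
  then show ?thesis
    using A by (intro eq_matI) (auto simp: cols_sub_def submatrix_def pick_lessThan)
qed

lemma carrier_mat_cols_sub:
  "A \<in> carrier_mat N M \<Longrightarrow> K \<subseteq> {..<M} \<Longrightarrow> cols_sub A K \<in> carrier_mat N (card K)"
  by (simp add: cols_sub_altdef)

lemma cols_sub_all: "A \<in> carrier_mat N M \<Longrightarrow> cols_sub A {..<M} = A"
  by (intro eq_matI) (auto simp: cols_sub_altdef pick_lessThan)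

lemma cmod_det_gram_cols_sub:
  assumes A: "A \<in> carrier_mat N M" and K: "K \<subseteq> {..<M}"
  shows "cmod (det (gram (cols_sub A K))) = (\<Sum>J | J \<subseteq> K \<and> card J = N. (cmod (det (cols_sub A J)))^2)"
proof -
  have fK: "finite K" using K finite_subset by blast
  have "gram (cols_sub A K) = mat N N (\<lambda>(r,s). \<Sum>i\<in>K. A $$ (r,i) * cnj (A $$ (s,i)))"
  proof (rule eq_matI)
    note C = carrier_mat_cols_sub[OF A K]
    fix r s assume "r < dim_row (mat N N (\<lambda>(r,s). \<Sum>i\<in>K. A $$ (r,i) * cnj (A $$ (s,i))))"
      "s < dim_col (mat N N (\<lambda>(r,s). \<Sum>i\<in>K. A $$ (r,i) * cnj (A $$ (s,i))))"
    then have "r < N" "s < N" by auto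
    then show "gram (cols_sub A K) $$ (r,s) = mat N N (\<lambda>(r,s). \<Sum>i\<in>K. A $$ (r,i) * cnj (A $$ (s,i))) $$ (r,s)"
      unfolding index_gram[OF C \<open>r < N\<close> \<open>s < N\<close>]
      using sum.reindex_bij_betw[OF bij_betw_pick[OF fK], of "\<lambda>i. A $$ (r,i) * cnj (A $$ (s,i))"]
      by (simp add: cols_sub_altdef[OF A K])
  qed (use carrier_mat_gram[OF carrier_mat_cols_sub[OF A K]] in auto)
  also note cauchy_binet[OF fK]
  also have "(\<Sum>J | J \<subseteq> K \<and> card J = N. det (mat N N (\<lambda>(r,s). A $$ (r, pick J s))) *
        det (mat N N (\<lambda>(r,s). cnj (A $$ (s, pick J r))))) =
      (\<Sum>J | J \<subseteq> K \<and> card J = N. of_real ((cmod (det (cols_sub A J)))^2))"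
  proof (intro sum.cong refl)
    fix J assume "J \<in> {J. J \<subseteq> K \<and> card J = N}"
    then have JM: "J \<subseteq> {..<M}" and cJ: "card J = N" using K by auto
    have C: "cols_sub A J \<in> carrier_mat N N" using carrier_mat_cols_sub[OF A JM] cJ by simp
    have "mat N N (\<lambda>(r,s). A $$ (r, pick J s)) = cols_sub A J"
      by (simp add: cols_sub_altdef[OF A JM] cJ)
    moreover have "mat N N (\<lambda>(r,s). cnj (A $$ (s, pick J r))) = mat_adjoint (cols_sub A J)"
      using index_mat_adjoint[OF C] carrier_mat_adjoint[OF C]
      by (intro eq_matI) (auto simp: cols_sub_altdef[OF A JM] cJ)
    ultimately show "det (mat N N (\<lambda>(r,s). A $$ (r, pick J s))) * det (mat N N (\<lambda>(r,s). cnj (A $$ (s, pick J r)))) =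
        of_real ((cmod (det (cols_sub A J)))^2)"
      by (simp only: det_mat_adjoint[OF C] complex_norm_square)
  qed
  also have "\<dots> = of_real (\<Sum>J | J \<subseteq> K \<and> card J = N. (cmod (det (cols_sub A J)))^2)"
    by (simp only: of_real_sum)
  finally show ?thesis by (simp only: norm_of_real) (simp add: sum_nonneg)
qed

lemma card_supersets:
  assumes S: "finite S" and J: "J \<subseteq> S" "card J \<le> k"
  shows "card {K. K \<subseteq> S \<and> card K = k \<and> J \<subseteq> K} = (card S - card J) choose (k - card J)"
proof -
  have fJ: "finite J" using S J finite_subset by blast
  have "{K. K \<subseteq> S \<and> card K = k \<and> J \<subseteq> K} = (\<lambda>L. L \<union> J) ` {L. L \<subseteq> S - J \<and> card L = k - card J}"
  proof (intro equalityI subsetI)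
    fix K assume K: "K \<in> {K. K \<subseteq> S \<and> card K = k \<and> J \<subseteq> K}"
    then have "card (K - J) = k - card J" using fJ by (simp add: card_Diff_subset)
    with K show "K \<in> (\<lambda>L. L \<union> J) ` {L. L \<subseteq> S - J \<and> card L = k - card J}"
      by (intro image_eqI[of _ _ "K - J"]) auto
  next
    fix K assume "K \<in> (\<lambda>L. L \<union> J) ` {L. L \<subseteq> S - J \<and> card L = k - card J}"
    then obtain L where L: "L \<subseteq> S - J" "card L = k - card J" and K: "K = L \<union> J" by auto
    moreover have "L \<inter> J = {}" using L(1) by blast
    ultimately have "card K = k" using J fJ finite_subset[OF L(1)] S by (simp add: card_Un_disjoint)
    then show "K \<in> {K. K \<subseteq> S \<and> card K = k \<and> J \<subseteq> K}" using K L J by auto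
  qed
  moreover have "inj_on (\<lambda>L. L \<union> J) {L. L \<subseteq> S - J \<and> card L = k - card J}"
    by (rule inj_onI) blast
  ultimately show ?thesis
    using n_subsets[of "S - J" "k - card J"] S J fJ by (simp add: card_image card_Diff_subset)
qed

lemma sum_subsets_of_subsets:
  fixes h :: "'a set \<Rightarrow> 'b::comm_semiring_1"
  assumes S: "finite S" and "n \<le> k"
  shows "(\<Sum>K | K \<subseteq> S \<and> card K = k. \<Sum>J | J \<subseteq> K \<and> card J = n. h J) =
    of_nat ((card S - n) choose (k - n)) * (\<Sum>J | J \<subseteq> S \<and> card J = n. h J)"
proof -
  have fin: "finite {K. K \<subseteq> S \<and> card K = k'}" for k' using S by (auto intro: finite_subset[of _ "Pow S"])
  have "(\<Sum>K | K \<subseteq> S \<and> card K = k. \<Sum>J | J \<subseteq> K \<and> card J = n. h J) =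
      (\<Sum>K | K \<subseteq> S \<and> card K = k. \<Sum>J | J \<in> {J. J \<subseteq> S \<and> card J = n} \<and> J \<subseteq> K. h J)"
    by (intro sum.cong refl) auto
  also have "\<dots> = (\<Sum>J | J \<subseteq> S \<and> card J = n. \<Sum>K | K \<in> {K. K \<subseteq> S \<and> card K = k} \<and> J \<subseteq> K. h J)"
    by (rule sum.swap_restrict[OF fin fin])
  also have "\<dots> = (\<Sum>J | J \<subseteq> S \<and> card J = n. of_nat ((card S - n) choose (k - n)) * h J)"
    using card_supersets[OF S] \<open>n \<le> k\<close> by (intro sum.cong refl) (simp add: conj_assoc)
  finally show ?thesis by (simp add: sum_distrib_left)
qed

lemma sum_cv_cols_sub_power2:
  assumes A: "A \<in> carrier_mat N M" and "N \<le> k"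
  shows "(\<Sum>K | K \<subseteq> {..<M} \<and> card K = k. (cv (cols_sub A K))^2) =
    real ((M - N) choose (k - N)) * cmod (det (gram A))"
proof -
  have "(\<Sum>K | K \<subseteq> {..<M} \<and> card K = k. (cv (cols_sub A K))^2) =
      (\<Sum>K | K \<subseteq> {..<M} \<and> card K = k. \<Sum>J | J \<subseteq> K \<and> card J = N. (cmod (det (cols_sub A J)))^2)"
    by (intro sum.cong refl) (simp add: cv_def gram_def[symmetric] cmod_det_gram_cols_sub[OF A] sum_nonneg)
  also have "\<dots> = real ((M - N) choose (k - N)) * cmod (det (gram (cols_sub A {..<M})))"
    using sum_subsets_of_subsets[of "{..<M}" N k] \<open>N \<le> k\<close> by (simp add: cmod_det_gram_cols_sub[OF A])
  finally show ?thesis by (simp add: cols_sub_all[OF A])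
qed

lemma sum_row_sqnorm_eq_sum_vnorm_col:
  assumes A: "A \<in> carrier_mat n m"
  shows "(\<Sum>r<n. row_sqnorm A r) = (\<Sum>l<m. (vnorm (col A l))^2)"
  using A by (simp add: row_sqnorm_def vnorm_def sum_nonneg sum.swap[of _ "{..<n}"])

lemma sum_power2_sub_mean:
  fixes x :: "'a \<Rightarrow> real"
  assumes "finite S" "S \<noteq> {}"
  shows "(\<Sum>K\<in>S. (x K - (\<Sum>L\<in>S. x L) / card S)^2) = (\<Sum>K\<in>S. (x K)^2) - (\<Sum>K\<in>S. x K)^2 / card S"
proof -
  define t where "t = (\<Sum>K\<in>S. x K)"
  define \<mu> where "\<mu> = t / card S"
  have n: "real (card S) > 0" using assms by (simp add: card_gt_0_iff)
  have "(\<Sum>K\<in>S. (x K - \<mu>)^2) = (\<Sum>K\<in>S. (x K)^2 - 2 * \<mu> * x K + \<mu>^2)"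
    by (intro sum.cong refl) (simp add: power2_eq_square algebra_simps)
  also have "\<dots> = (\<Sum>K\<in>S. (x K)^2) - 2 * \<mu> * t + card S * \<mu>^2"
    by (simp add: sum.distrib sum_subtractf sum_distrib_left t_def)
  also have "\<dots> = (\<Sum>K\<in>S. (x K)^2) - t^2 / card S"
    using n by (simp add: \<mu>_def field_simps power2_eq_square)
  finally show ?thesis by (simp add: t_def \<mu>_def)
qed

lemma sum_le_sqrt_card_mult:
  fixes x :: "'a \<Rightarrow> real"
  assumes S: "finite S" "S \<noteq> {}" and sq: "(\<Sum>K\<in>S. (x K)^2) = c * d" and "0 < c" "d \<le> 1"
  shows "(\<Sum>K\<in>S. x K) \<le> sqrt (real (card S) * c)"
    and "(\<Sum>K\<in>S. x K) = sqrt (real (card S) * c) \<longleftrightarrow>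
      d = 1 \<and> (\<forall>K\<in>S. x K = sqrt (inverse (real (card S)) * c))"
proof -
  define n where "n = real (card S)"
  define t where "t = (\<Sum>K\<in>S. x K)"
  have n: "n > 0" using S by (simp add: n_def card_gt_0_iff)
  have var: "(\<Sum>K\<in>S. (x K - t / n)^2) = c * d - t^2 / n"
    using sum_power2_sub_mean[OF S, of x] sq by (simp add: t_def n_def)
  then have "t^2 / n \<le> c * d" using sum_nonneg[of S "\<lambda>K. (x K - t / n)^2"] by simp
  then have t2: "t^2 \<le> n * c * d" using n by (simp add: field_simps)
  also have "\<dots> \<le> n * c" using n \<open>0 < c\<close> \<open>d \<le> 1\<close> by simp
  finally show "t \<le> sqrt (n * c)" unfolding t_def n_def by (rule real_le_rsqrt)
  have mean: "sqrt (inverse n * c) = sqrt (n * c) / n"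
    using n by (simp add: real_sqrt_divide real_sqrt_mult field_simps)
  show "t = sqrt (n * c) \<longleftrightarrow> d = 1 \<and> (\<forall>K\<in>S. x K = sqrt (inverse n * c))"
  proof
    assume t: "t = sqrt (n * c)"
    then have "t^2 = n * c" using n \<open>0 < c\<close> by simp
    with t2 have "d = 1" using n \<open>0 < c\<close> \<open>d \<le> 1\<close> by (simp add: mult_le_cancel_left1)
    moreover have "(\<Sum>K\<in>S. (x K - t / n)^2) = 0" using var \<open>t^2 = n * c\<close> \<open>d = 1\<close> n by simp
    then have "x K = t / n" if "K \<in> S" for K
      using sum_nonneg_eq_0_iff[OF S(1), of "\<lambda>K. (x K - t / n)^2"] that by simp
    ultimately show "d = 1 \<and> (\<forall>K\<in>S. x K = sqrt (inverse n * c))" using t mean by simp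
  next
    assume "d = 1 \<and> (\<forall>K\<in>S. x K = sqrt (inverse n * c))"
    then show "t = sqrt (n * c)" using mean n by (simp add: t_def n_def)
  qed
qed

lemma CV_bound_complex:
  fixes \<Phi> :: "complex mat"
  assumes \<Phi>: "\<Phi> \<in> carrier_mat N M" and nrm: "\<forall>i<M. vnorm (col \<Phi> i) = sqrt (real N / real M)"
    and "N \<le> k" "k \<le> M"
  shows "CV k \<Phi> \<le> sqrt (real (M choose k) * real ((M - N) choose (M - k))) \<and>
      (CV k \<Phi> = sqrt (real (M choose k) * real ((M - N) choose (M - k))) \<longleftrightarrow>
         \<Phi> * mat_adjoint \<Phi> = 1\<^sub>m N \<and>
         (\<forall>K. K \<subseteq> {..<M} \<and> card K = k \<longrightarrow>
            cv (cols_sub \<Phi> K) = sqrt (inverse (real (M choose k)) * real ((M - N) choose (M - k)))))"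
proof -
  let ?Ks = "{K. K \<subseteq> {..<M} \<and> card K = k}"
  let ?C = "real ((M - N) choose (M - k))"
  define D where "D = cmod (det (gram \<Phi>))"
  have Ks: "finite ?Ks" "?Ks \<noteq> {}" "card ?Ks = M choose k"
    using \<open>k \<le> M\<close> n_subsets[of "{..<M}" k] by (auto intro: finite_subset[of _ "Pow {..<M}"] exI[of _ "{..<k}"])
  have rows: "(\<Sum>r<N. row_sqnorm \<Phi> r) = N"
    using sum_row_sqnorm_eq_sum_vnorm_col[OF \<Phi>] nrm \<open>N \<le> k\<close> \<open>k \<le> M\<close> by simp
  have "(\<Sum>K\<in>?Ks. (cv (cols_sub \<Phi> K))^2) = ?C * D"
    using sum_cv_cols_sub_power2[OF \<Phi> \<open>N \<le> k\<close>] binomial_symmetric[of "k - N" "M - N"] \<open>N \<le> k\<close> \<open>k \<le> M\<close>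
    by (simp add: D_def)
  moreover have "0 < ?C" using \<open>N \<le> k\<close> \<open>k \<le> M\<close> by simp
  moreover have "D \<le> 1" using det_gram_le_1[OF \<Phi> rows] by (simp add: D_def)
  moreover have "D = 1 \<longleftrightarrow> \<Phi> * mat_adjoint \<Phi> = 1\<^sub>m N"
    using gram_eq_one_if_det_ge_1[OF \<Phi> rows] by (auto simp: D_def gram_def)
  moreover have "CV k \<Phi> = (\<Sum>K\<in>?Ks. cv (cols_sub \<Phi> K))" using \<Phi> by (simp add: CV_def)
  ultimately show ?thesis
    using sum_le_sqrt_card_mult[OF Ks(1,2), of "\<lambda>K. cv (cols_sub \<Phi> K)" ?C D] Ks(3) by auto
qed

lemma mat_adjoint_map_of_real:
  "mat_adjoint (map_mat complex_of_real A) = map_mat complex_of_real (mat_adjoint A)"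
  by (intro eq_matI) (auto simp: mat_adjoint_def mat_of_rows_index)

lemma cols_sub_map_mat: "cols_sub (map_mat f A) K = map_mat f (cols_sub A K)"
  by (intro eq_matI) (auto simp: cols_sub_def submatrix_def pick_le)

lemma cv_map_of_real: "cv (map_mat complex_of_real A) = cv A"
proof -
  have "map_mat complex_of_real A * mat_adjoint (map_mat complex_of_real A) =
      map_mat complex_of_real (A * mat_adjoint A)"
    unfolding mat_adjoint_map_of_real
    by (rule of_real_hom.mat_hom_mult[OF carrier_mat_triv carrier_mat_adjoint[OF carrier_mat_triv], symmetric])
  then show ?thesis by (simp add: cv_def of_real_hom.hom_det)
qed

lemma CV_map_of_real: "CV k (map_mat complex_of_real A) = CV k A"
  by (simp add: CV_def cols_sub_map_mat cv_map_of_real)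

lemma vnorm_map_of_real: "vnorm (map_vec complex_of_real v) = vnorm v"
  by (simp add: vnorm_def)

lemma CV_bound_real:
  fixes \<Phi> :: "real mat"
  assumes \<Phi>: "\<Phi> \<in> carrier_mat N M" and nrm: "\<forall>i<M. vnorm (col \<Phi> i) = sqrt (real N / real M)"
    and "N \<le> k" "k \<le> M"
  shows "CV k \<Phi> \<le> sqrt (real (M choose k) * real ((M - N) choose (M - k))) \<and>
      (CV k \<Phi> = sqrt (real (M choose k) * real ((M - N) choose (M - k))) \<longleftrightarrow>
         \<Phi> * mat_adjoint \<Phi> = 1\<^sub>m N \<and>
         (\<forall>K. K \<subseteq> {..<M} \<and> card K = k \<longrightarrow>
            cv (cols_sub \<Phi> K) = sqrt (inverse (real (M choose k)) * real ((M - N) choose (M - k)))))"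
proof -
  let ?\<Psi> = "map_mat complex_of_real \<Phi>"
  have "?\<Psi> \<in> carrier_mat N M" using \<Phi> by simp
  moreover have "\<forall>i<M. vnorm (col ?\<Psi> i) = sqrt (real N / real M)"
    using \<Phi> nrm by (simp add: vnorm_map_of_real)
  moreover have "?\<Psi> * mat_adjoint ?\<Psi> = 1\<^sub>m N \<longleftrightarrow> \<Phi> * mat_adjoint \<Phi> = 1\<^sub>m N"
    using of_real_hom.mat_hom_mult[OF \<Phi> carrier_mat_adjoint[OF \<Phi>]] of_real_hom.mat_hom_inj
    by (metis mat_adjoint_map_of_real of_real_hom.mat_hom_one)
  ultimately show ?thesis
    using CV_bound_complex[of ?\<Psi> N M k] \<open>N \<le> k\<close> \<open>k \<le> M\<close>
    by (simp add: CV_map_of_real cols_sub_map_mat cv_map_of_real)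
qed

theorem proposition19:
  shows
  "(\<forall>(\<Phi>::real mat) N M k.
      \<Phi> \<in> carrier_mat N M \<longrightarrow>
      (\<forall>i<M. vnorm (col \<Phi> i) = sqrt (real N / real M)) \<longrightarrow>
      N \<le> k \<longrightarrow> k \<le> M \<longrightarrow>
      CV k \<Phi> \<le> sqrt (real (M choose k) * real ((M - N) choose (M - k))) \<and>
      (CV k \<Phi> = sqrt (real (M choose k) * real ((M - N) choose (M - k))) \<longleftrightarrow>
         \<Phi> * mat_adjoint \<Phi> = 1\<^sub>m N \<and>
         (\<forall>K. K \<subseteq> {..<M} \<and> card K = k \<longrightarrow>
            cv (cols_sub \<Phi> K) = sqrt (inverse (real (M choose k)) * real ((M - N) choose (M - k))))))
   \<and>
   (\<forall>(\<Phi>::complex mat) N M k.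
      \<Phi> \<in> carrier_mat N M \<longrightarrow>
      (\<forall>i<M. vnorm (col \<Phi> i) = sqrt (real N / real M)) \<longrightarrow>
      N \<le> k \<longrightarrow> k \<le> M \<longrightarrow>
      CV k \<Phi> \<le> sqrt (real (M choose k) * real ((M - N) choose (M - k))) \<and>
      (CV k \<Phi> = sqrt (real (M choose k) * real ((M - N) choose (M - k))) \<longleftrightarrow>
         \<Phi> * mat_adjoint \<Phi> = 1\<^sub>m N \<and>
         (\<forall>K. K \<subseteq> {..<M} \<and> card K = k \<longrightarrow>
            cv (cols_sub \<Phi> K) = sqrt (inverse (real (M choose k)) * real ((M - N) choose (M - k))))))"
  using CV_bound_real CV_bound_complex by blast

end
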